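(* In $\mathrm{LK}(\mathcal T)$, for every context $\Gamma$, every positive literal $p$, every formula $B$ and every multiset of formulae $\Delta$, assume $\mathcal T(\Gamma^{lit},\overline p)$ holds. Then: (cut_1) if $\Gamma,p\vdash\Delta$ is derivable, then $\Gamma\vdash\Delta$ is derivable; (cut_2) if $\Gamma,p\vdash[B]$ is derivable, then $\Gamma\vdash[B]$ is derivable.
   Context: Work in first-order logic where every predicate symbol is classified as either positive or negative. A literal is an atom (a predicate symbol applied to a list of first-order terms) or the negation of an atom; literals carry the involutive negation $l \mapsto \overline{l}$. Let $\mathcal P$ be the set of literals that are either atoms with a positive predicate symbol or negations of atoms with a negative predicate symbol; elements of $\mathcal P$ are called positive literals. Formulae are: positive formulae $P ::= p \mid A \wedge^+ B \mid A \vee^+ B \mid \exists x A$ and negative formulae $N ::= \overline{p} \mid A \wedge^- B \mid A \vee^- B \mid \forall x A$, with $p \in \mathcal P$ and $A,B$ arbitrary formulae. Negation is extended to all formulae by $\overline{\overline p}=p$, $\overline{A\wedge^+B}=\overline A\vee^-\overline B$, $\overline{A\wedge^-B}=\overline A\vee^+\overline B$, $\overline{A\vee^+B}=\overline A\wedge^-\overline B$, $\overline{A\vee^-B}=\overline A\wedge^+\overline B$, $\overline{\exists xA}=\forall x\overline A$, $\overline{\forall xA}=\exists x\overline A$. $A\{x:=t\}$ denotes capture-avoiding substitution. A procedure $\mathcal T$ is a predicate $\mathcal T(S)$ on finite sets $S$ of literals (intuitively: the decision procedure returns UNSAT on the conjunction of $S$), assumed to satisfy: (Weakening) $\mathcal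 T(S)$ implies $\mathcal T(S\cup S')$; (Contraction) $\mathcal T(S,A,A)$ implies $\mathcal T(S,A)$; (Instantiation) $\mathcal T(S)$ implies $\mathcal T(S\{x:=t\})$; (Consistency) $\mathcal T(S,p)$ and $\mathcal T(S,\overline p)$ imply $\mathcal T(S)$. The calculus $\mathrm{LK}(\mathcal T)$ has focused sequents $\Gamma\vdash[A]$ and unfocused sequents $\Gamma\vdash\Delta$, where $\Gamma$ (a context) is a multiset of negative formulae and positive literals, $\Delta$ is a multiset of formulae, and $A$ is a formula. $\Gamma^{lit}$ denotes the sub-multiset of literals of $\Gamma$. Rules (premisses above conclusion written as "from ... infer ..."): Synchronous: from $\Gamma\vdash[A]$ and $\Gamma\vdash[B]$ infer $\Gamma\vdash[A\wedge^+B]$; from $\Gamma\vdash[A_i]$ ($i\in\{1,2\}$) infer $\Gamma\vdash[A_1\vee^+A_2]$; from $\Gamma\vdash[A\{x:=t\}]$ infer $\Gamma\vdash[\exists xA]$; infer $\Gamma,p\vdash[p]$ for $p$ a positive literal (axiom); if $\mathcal T(\Gamma^{lit},\overline p)$ holds, infer $\Gamma\vdash[p]$ for $p$ a positive literal; from $\Gamma\vdash N$ infer $\Gamma\vdash[N]$ for $N$ negative. Asynchronous: from $\Gamma\vdash A,\Delta$ and $\Gamma\vdash B,\Delta$ infer $\Gamma\vdash A\wedge^-B,\Delta$; from $\Gamma\vdash A_1,A_2,\Delta$ infer $\Gamma\vdash A_1\vee^-A_2,\Delta$; from $\Gamma\vdash A,\Delta$ infer $\Gamma\vdash\forall xA,\Delta$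 provided $x$ is not free in $\Gamma,\Delta$; from $\Gamma,\overline A\vdash\Delta$ infer $\Gamma\vdash A,\Delta$ provided $A$ is positive or a literal. Structural: from $\Gamma,\overline P\vdash[P]$ infer $\Gamma,\overline P\vdash$ (empty right-hand side) for $P$ positive; if $\mathcal T(\Gamma^{lit})$ holds, infer $\Gamma\vdash$ (empty right-hand side). *)

theory Defs
  imports Main "HOL-Library.Multiset"
begin

datatype 'f trm = Var nat | Fn 'f "'f trm list"

fun lift_trm :: "nat \<Rightarrow> 'f trm \<Rightarrow> 'f trm" where
  "lift_trm k (Var i) = (if i < k then Var i else Var (Suc i))"
| "lift_trm k (Fn f ts) = Fn f (map (lift_trm k) ts)"

text \<open>Substituting term t for variable k (removing variable k, as when
  instantiating a binder).\<close>
fun subst_trm :: "nat \<Rightarrow> 'f trm \<Rightarrow> 'f trm \<Rightarrow> 'f trm" where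
  "subst_trm k t (Var i) = (if i < k then Var i else if i = k then t else Var (i - 1))"
| "subst_trm k t (Fn f ts) = Fn f (map (subst_trm k t) ts)"

fun inst_trm :: "nat \<Rightarrow> 'f trm \<Rightarrow> 'f trm \<Rightarrow> 'f trm" where
  "inst_trm x t (Var i) = (if i = x then t else Var i)"
| "inst_trm x t (Fn f ts) = Fn f (map (inst_trm x t) ts)"

text \<open>\<open>Lit True P ts\<close> is the atom \<open>P(ts)\<close>, \<open>Lit False P ts\<close> its negation.\<close>
datatype ('p, 'f) lit = Lit bool 'p "'f trm list"

fun lneg :: "('p, 'f) lit \<Rightarrow> ('p, 'f) lit" where
  "lneg (Lit b P ts) = Lit (\<not> b) P ts"

text \<open>\<open>pos P\<close> says predicate symbol P is positive. Positive literals: positive atoms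
  and negations of negative atoms.\<close>
fun positive_lit :: "('p \<Rightarrow> bool) \<Rightarrow> ('p, 'f) lit \<Rightarrow> bool" where
  "positive_lit pos (Lit b P ts) = (b = pos P)"

fun inst_lit :: "nat \<Rightarrow> 'f trm \<Rightarrow> ('p, 'f) lit \<Rightarrow> ('p, 'f) lit" where
  "inst_lit x t (Lit b P ts) = Lit b P (map (inst_trm x t) ts)"

fun lift_lit :: "nat \<Rightarrow> ('p, 'f) lit \<Rightarrow> ('p, 'f) lit" where
  "lift_lit k (Lit b P ts) = Lit b P (map (lift_trm k) ts)"

fun subst_lit :: "nat \<Rightarrow> 'f trm \<Rightarrow> ('p, 'f) lit \<Rightarrow> ('p, 'f) lit" where
  "subst_lit k t (Lit b P ts) = Lit b P (map (subst_trm k t) ts)"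

datatype ('p, 'f) fm =
    Atom "('p, 'f) lit"
  | AndP "('p, 'f) fm" "('p, 'f) fm"
  | OrP "('p, 'f) fm" "('p, 'f) fm"
  | AndN "('p, 'f) fm" "('p, 'f) fm"
  | OrN "('p, 'f) fm" "('p, 'f) fm"
  | Ex "('p, 'f) fm"   \<comment> \<open>binds de Bruijn index 0\<close>
  | All "('p, 'f) fm"  \<comment> \<open>binds de Bruijn index 0\<close>

fun fneg :: "('p, 'f) fm \<Rightarrow> ('p, 'f) fm" where
  "fneg (Atom l) = Atom (lneg l)"
| "fneg (AndP A B) = OrN (fneg A) (fneg B)"
| "fneg (AndN A B) = OrP (fneg A) (fneg B)"
| "fneg (OrP A B) = AndN (fneg A) (fneg B)"
| "fneg (OrN A B) = AndP (fneg A) (fneg B)"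
| "fneg (Ex A) = All (fneg A)"
| "fneg (All A) = Ex (fneg A)"

fun positive_fm :: "('p \<Rightarrow> bool) \<Rightarrow> ('p, 'f) fm \<Rightarrow> bool" where
  "positive_fm pos (Atom l) = positive_lit pos l"
| "positive_fm pos (AndP A B) = True"
| "positive_fm pos (OrP A B) = True"
| "positive_fm pos (Ex A) = True"
| "positive_fm pos (AndN A B) = False"
| "positive_fm pos (OrN A B) = False"
| "positive_fm pos (All A) = False"

definition negative_fm :: "('p \<Rightarrow> bool) \<Rightarrow> ('p, 'f) fm \<Rightarrow> bool" where
  "negative_fm pos A = (\<not> positive_fm pos A)"

fun is_lit :: "('p, 'f) fm \<Rightarrow> bool" where
  "is_lit (Atom l) = True"
| "is_lit _ = False"

fun lift_fm :: "nat \<Rightarrow> ('p, 'f) fm \<Rightarrow> ('p, 'f) fm" where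
  "lift_fm k (Atom l) = Atom (lift_lit k l)"
| "lift_fm k (AndP A B) = AndP (lift_fm k A) (lift_fm k B)"
| "lift_fm k (OrP A B) = OrP (lift_fm k A) (lift_fm k B)"
| "lift_fm k (AndN A B) = AndN (lift_fm k A) (lift_fm k B)"
| "lift_fm k (OrN A B) = OrN (lift_fm k A) (lift_fm k B)"
| "lift_fm k (Ex A) = Ex (lift_fm (Suc k) A)"
| "lift_fm k (All A) = All (lift_fm (Suc k) A)"

fun subst_fm :: "nat \<Rightarrow> 'f trm \<Rightarrow> ('p, 'f) fm \<Rightarrow> ('p, 'f) fm" where
  "subst_fm k t (Atom l) = Atom (subst_lit k t l)"
| "subst_fm k t (AndP A B) = AndP (subst_fm k t A) (subst_fm k t B)"
| "subst_fm k t (OrP A B) = OrP (subst_fm k t A) (subst_fm k t B)"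
| "subst_fm k t (AndN A B) = AndN (subst_fm k t A) (subst_fm k t B)"
| "subst_fm k t (OrN A B) = OrN (subst_fm k t A) (subst_fm k t B)"
| "subst_fm k t (Ex A) = Ex (subst_fm (Suc k) (lift_trm 0 t) A)"
| "subst_fm k t (All A) = All (subst_fm (Suc k) (lift_trm 0 t) A)"

definition is_context :: "('p \<Rightarrow> bool) \<Rightarrow> ('p, 'f) fm multiset \<Rightarrow> bool" where
  "is_context pos \<Gamma> = (\<forall>A \<in># \<Gamma>. negative_fm pos A \<or> (\<exists>l. A = Atom l \<and> positive_lit pos l))"

definition ctx_lits :: "('p, 'f) fm multiset \<Rightarrow> ('p, 'f) lit set" where
  "ctx_lits \<Gamma> = {l. Atom l \<in># \<Gamma>}"

definition procedure :: "(('p, 'f) lit set \<Rightarrow> bool) \<Rightarrow> bool" where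
  "procedure T =
    ((\<forall>S S'. finite S \<longrightarrow> finite S' \<longrightarrow> T S \<longrightarrow> T (S \<union> S')) \<and>
     (\<forall>S A. finite S \<longrightarrow> T (S \<union> {A} \<union> {A}) \<longrightarrow> T (S \<union> {A})) \<and>
     (\<forall>S x t. finite S \<longrightarrow> T S \<longrightarrow> T (inst_lit x t ` S)) \<and>
     (\<forall>S p. finite S \<longrightarrow> T (S \<union> {p}) \<longrightarrow> T (S \<union> {lneg p}) \<longrightarrow> T S))"

datatype ('p, 'f) seq =
    Foc "('p, 'f) fm multiset" "('p, 'f) fm"             \<comment> \<open>\<open>\<Gamma> \<turnstile> [A]\<close>\<close>
  | Unf "('p, 'f) fm multiset" "('p, 'f) fm multiset"    \<comment> \<open>\<open>\<Gamma> \<turnstile> \<Delta>\<close>\<close>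

inductive derivable :: "('p \<Rightarrow> bool) \<Rightarrow> (('p, 'f) lit set \<Rightarrow> bool) \<Rightarrow> ('p, 'f) seq \<Rightarrow> bool"
  for pos T where
  andP: "derivable pos T (Foc \<Gamma> A) \<Longrightarrow> derivable pos T (Foc \<Gamma> B) \<Longrightarrow>
         derivable pos T (Foc \<Gamma> (AndP A B))"
| orP1: "derivable pos T (Foc \<Gamma> A1) \<Longrightarrow> derivable pos T (Foc \<Gamma> (OrP A1 A2))"
| orP2: "derivable pos T (Foc \<Gamma> A2) \<Longrightarrow> derivable pos T (Foc \<Gamma> (OrP A1 A2))"
| ex: "derivable pos T (Foc \<Gamma> (subst_fm 0 t A)) \<Longrightarrow> derivable pos T (Foc \<Gamma> (Ex A))"
| ax: "positive_lit pos p \<Longrightarrow> derivable pos T (Foc (add_mset (Atom p) \<Gamma>) (Atom p))"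
| thy_foc: "positive_lit pos p \<Longrightarrow> T (ctx_lits \<Gamma> \<union> {lneg p}) \<Longrightarrow>
         derivable pos T (Foc \<Gamma> (Atom p))"
| release: "negative_fm pos N \<Longrightarrow> derivable pos T (Unf \<Gamma> {#N#}) \<Longrightarrow>
         derivable pos T (Foc \<Gamma> N)"
| andN: "derivable pos T (Unf \<Gamma> (add_mset A \<Delta>)) \<Longrightarrow> derivable pos T (Unf \<Gamma> (add_mset B \<Delta>)) \<Longrightarrow>
         derivable pos T (Unf \<Gamma> (add_mset (AndN A B) \<Delta>))"
| orN: "derivable pos T (Unf \<Gamma> (add_mset A1 (add_mset A2 \<Delta>))) \<Longrightarrow>
         derivable pos T (Unf \<Gamma> (add_mset (OrN A1 A2) \<Delta>))"
| all: "derivable pos T (Unf (image_mset (lift_fm 0) \<Gamma>) (add_mset A (image_mset (lift_fm 0) \<Delta>))) \<Longrightarrow>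
         derivable pos T (Unf \<Gamma> (add_mset (All A) \<Delta>))"
| store: "positive_fm pos A \<or> is_lit A \<Longrightarrow> derivable pos T (Unf (add_mset (fneg A) \<Gamma>) \<Delta>) \<Longrightarrow>
         derivable pos T (Unf \<Gamma> (add_mset A \<Delta>))"
| decide: "positive_fm pos P \<Longrightarrow> derivable pos T (Foc (add_mset (fneg P) \<Gamma>) P) \<Longrightarrow>
         derivable pos T (Unf (add_mset (fneg P) \<Gamma>) {#})"
| thy_unf: "T (ctx_lits \<Gamma>) \<Longrightarrow> derivable pos T (Unf \<Gamma> {#})"

end

theory Submission
  imports Defs
begin

(* We prove this by one induction
   over derivations, for focused and unfocused sequents simultaneously: every
   rule is replayed in the smaller context.  The only interesting cases are
   - the axiom on p itself, replaced by the theory rule for p;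
   - the two theory rules, where the extra literal p is eliminated by the
     Consistency property of T (weakening supplies the complementary branch);
   - the universal rule, whose premiss lifts all free variables of the context,
     so the hypothesis on T must be transported along lifting.  This follows
     from Instantiation: lifting above the largest free variable is the
     identity, and each lifting step downwards is an instantiation. *)

text \<open>Weakening, Instantiation and Consistency as usable rules.\<close>
lemma procedure_weaken:
  assumes "procedure T" "finite S" "finite S'" "T S"
  shows "T (S \<union> S')"
proof -
  have "\<forall>S S'. finite S \<longrightarrow> finite S' \<longrightarrow> T S \<longrightarrow> T (S \<union> S')"
    using assms(1) unfolding procedure_def by (elim conjE)
  then show ?thesis using assms(2-) by blast
qed

lemma procedure_instantiate:
  assumes "procedure T" "finite S" "T S"
  shows "T (inst_lit x t ` S)"
proof -
  have "\<forall>S x t. finite S \<longrightarrow> T S \<longrightarrow> T (inst_lit x t ` S)"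
    using assms(1) unfolding procedure_def by (elim conjE)
  then show ?thesis using assms(2-) by blast
qed

lemma procedure_consistency:
  assumes "procedure T" "finite S" "T (S \<union> {p})" "T (S \<union> {lneg p})"
  shows "T S"
proof -
  have "\<forall>S p. finite S \<longrightarrow> T (S \<union> {p}) \<longrightarrow> T (S \<union> {lneg p}) \<longrightarrow> T S"
    using assms(1) unfolding procedure_def by (elim conjE)
  then show ?thesis using assms(2-) by blast
qed

fun var_bound :: "'f trm \<Rightarrow> nat" where
  "var_bound (Var i) = Suc i"
| "var_bound (Fn f ts) = sum_list (map var_bound ts)"

fun lit_var_bound :: "('p, 'f) lit \<Rightarrow> nat" where
  "lit_var_bound (Lit b P ts) = sum_list (map var_bound ts)"

lemma lift_trm_above_bound: "var_bound t \<le> k \<Longrightarrow> lift_trm k t = t"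
proof (induction t)
  case (Var i)
  then show ?case by simp
next
  case (Fn f ts)
  have "lift_trm k u = u" if "u \<in> set ts" for u
    using Fn that member_le_sum_list[of "var_bound u" "map var_bound ts"] by simp
  then show ?case by (simp add: map_idI)
qed

lemma lift_lit_above_bound: "lit_var_bound l \<le> k \<Longrightarrow> lift_lit k l = l"
proof (cases l)
  case (Lit b P ts)
  assume bound: "lit_var_bound l \<le> k"
  have "lift_trm k u = u" if "u \<in> set ts" for u
    using Lit bound that member_le_sum_list[of "var_bound u" "map var_bound ts"]
    by (simp add: lift_trm_above_bound)
  then show ?thesis using Lit by (simp add: map_idI)
qed

text \<open>Lifting from \<open>n\<close> is lifting from \<open>n + 1\<close> followed by renaming the
  (now unused) variable \<open>n\<close> to \<open>n + 1\<close>; this is what reduces lifting to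
  instantiation.\<close>
lemma inst_lift_trm: "inst_trm n (Var (Suc n)) (lift_trm (Suc n) t) = lift_trm n t"
  by (induction t) auto

lemma inst_lift_lit: "inst_lit n (Var (Suc n)) (lift_lit (Suc n) l) = lift_lit n l"
  by (cases l) (simp add: inst_lift_trm)

text \<open>Instantiation implies closure under lifting from any index \<open>k\<close>: start
  from an index \<open>N\<close> above all free variables, where lifting is the identity,
  and descend one index at a time, each step being an instantiation.\<close>
lemma procedure_lift:
  assumes T: "procedure T" and fin: "finite S" and TS: "T S"
  shows "T (lift_lit k ` S)"
proof -
  define N where "N = k + (\<Sum>l\<in>S. lit_var_bound l)"
  have "lift_lit N l = l" if "l \<in> S" for l
    using fin that by (auto simp: N_def intro!: lift_lit_above_bound
        dest: member_le_sum[of _ S lit_var_bound])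
  then have top: "T (lift_lit N ` S)"
    using TS by (simp add: image_cong)
  have "k \<le> N" by (simp add: N_def)
  then show ?thesis
  proof (induction k rule: inc_induct)
    case base
    then show ?case using top .
  next
    case (step m)
    have "T (inst_lit m (Var (Suc m)) ` lift_lit (Suc m) ` S)"
      using procedure_instantiate[OF T _ step.IH] fin by simp
    then show ?case by (simp add: image_image inst_lift_lit)
  qed
qed

lemma finite_ctx_lits: "finite (ctx_lits G)"
proof -
  have "ctx_lits G = Atom -` set_mset G" by (auto simp: ctx_lits_def)
  then show ?thesis by (simp add: finite_vimageI inj_def)
qed

lemma ctx_lits_add_atom: "ctx_lits (add_mset (Atom l) G) = insert l (ctx_lits G)"
  by (auto simp: ctx_lits_def)

lemma ctx_lits_add: "ctx_lits (add_mset A G) = ctx_lits G \<union> ctx_lits {#A#}"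
  by (auto simp: ctx_lits_def)

lemma lift_fm_eq_Atom: "lift_fm k A = Atom l \<longleftrightarrow> (\<exists>l'. A = Atom l' \<and> l = lift_lit k l')"
  by (cases A) auto

lemma ctx_lits_lift: "ctx_lits (image_mset (lift_fm k) G) = lift_lit k ` ctx_lits G"
  by (auto simp: ctx_lits_def image_iff lift_fm_eq_Atom eq_commute[of "Atom _"]
      intro: rev_bexI[of "Atom _"])

lemma positive_lift_lit: "positive_lit pos (lift_lit k l) = positive_lit pos l"
  by (cases l) simp

lemma lneg_lift_lit: "lneg (lift_lit k l) = lift_lit k (lneg l)"
  by (cases l) simp

text \<open>The refutation hypothesis of the cut survives every way the
  context grows or changes in a premiss of a rule.\<close>
lemma refutes_extend:
  assumes "procedure T" "T (ctx_lits G \<union> {q})"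
  shows "T (ctx_lits (add_mset A G) \<union> {q})"
proof -
  have "T ((ctx_lits G \<union> {q}) \<union> ctx_lits {#A#})"
    using procedure_weaken[OF assms(1) _ _ assms(2)] finite_ctx_lits by blast
  then show ?thesis by (metis ctx_lits_add sup_assoc sup_commute)
qed

lemma refutes_lift:
  assumes "procedure T" "T (ctx_lits G \<union> {lneg p})"
  shows "T (ctx_lits (image_mset (lift_fm k) G) \<union> {lneg (lift_lit k p)})"
  using procedure_lift[OF assms(1) _ assms(2), of k] finite_ctx_lits[of G]
  by (simp add: ctx_lits_lift lneg_lift_lit)

text \<open>Context of a sequent, and the same sequent over another context; this
  lets one induction treat focused and unfocused sequents together.\<close>
fun seq_ctx :: "('p, 'f) seq \<Rightarrow> ('p, 'f) fm multiset" where
  "seq_ctx (Foc G B) = G"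
| "seq_ctx (Unf G D) = G"

fun seq_with_ctx :: "('p, 'f) seq \<Rightarrow> ('p, 'f) fm multiset \<Rightarrow> ('p, 'f) seq" where
  "seq_with_ctx (Foc G B) G' = Foc G' B"
| "seq_with_ctx (Unf G D) G' = Unf G' D"

lemma positive_lit_lneg: "positive_lit pos (lneg l) \<longleftrightarrow> \<not> positive_lit pos l"
  by (cases l) auto

text \<open>A positive literal cannot be the negation of a positive formula, so
  the formula stored by the decide rule is never the cut literal.\<close>
lemma fneg_positive_not_positive_atom:
  assumes "positive_fm pos P" "positive_lit pos p"
  shows "fneg P \<noteq> Atom p"
  using assms by (cases P) (auto simp: positive_lit_lneg)

lemma member_other_than_cut:
  assumes "add_mset A G = add_mset (Atom p) G0" "A \<noteq> Atom p"
  obtains G1 where "G0 = add_mset A G1"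
  using assms by (metis add_mset_eq_single insert_noteq_member mset_add)

text \<open>The cut, generalised over arbitrary sequents so that rule induction
  applies: removing a refuted positive literal from the context of any
  derivable sequent leaves it derivable.\<close>
lemma cut_refuted_literal:
  assumes D: "derivable pos T s" and T: "procedure T"
  shows "seq_ctx s = add_mset (Atom p) G0 \<Longrightarrow> positive_lit pos p \<Longrightarrow>
    T (ctx_lits G0 \<union> {lneg p}) \<Longrightarrow> derivable pos T (seq_with_ctx s G0)"
  using D
proof (induction arbitrary: G0 p rule: derivable.induct)
  case (ax q \<Gamma>)
  show ?case
  proof (cases "q = p")
    case True
    then show ?thesis using ax by (auto intro: derivable.thy_foc)
  next
    case False
    with ax(2) obtain G1 where "G0 = add_mset (Atom q) G1"
      by (auto elim: member_other_than_cut)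
    then show ?thesis using ax by (auto intro: derivable.ax)
  qed
next
  case (thy_foc q \<Gamma>)
  let ?S = "ctx_lits G0 \<union> {lneg q}"
  have "T (?S \<union> {p})"
    using thy_foc(2,3) by (simp add: ctx_lits_add_atom insert_commute)
  moreover have "T (?S \<union> {lneg p})"
    using refutes_extend[OF T thy_foc.prems(3), of "Atom (lneg q)"]
    by (simp add: ctx_lits_add_atom insert_commute)
  ultimately have "T ?S"
    using procedure_consistency[OF T, of ?S] finite_ctx_lits[of G0] by simp
  then show ?case using thy_foc by (auto intro: derivable.thy_foc)
next
  case (all \<Gamma> A \<Delta>)
  have "derivable pos T (Unf (image_mset (lift_fm 0) G0) (add_mset A (image_mset (lift_fm 0) \<Delta>)))"
    using all(2)[of "lift_lit 0 p"] all.prems refutes_lift[OF T all.prems(3)]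
    by (simp add: positive_lift_lit)
  then show ?case by (auto intro: derivable.all)
next
  case (store A \<Gamma> \<Delta>)
  have "derivable pos T (Unf (add_mset (fneg A) G0) \<Delta>)"
    using store(3) store.prems refutes_extend[OF T store.prems(3)] by simp
  then show ?case using store(1) by (auto intro: derivable.store)
next
  case (decide P \<Gamma>)
  have "fneg P \<noteq> Atom p"
    using fneg_positive_not_positive_atom decide(1) decide.prems(2) by blast
  moreover have "add_mset (fneg P) \<Gamma> = add_mset (Atom p) G0"
    using decide.prems(1) by simp
  ultimately obtain G1 where G1: "G0 = add_mset (fneg P) G1"
    using member_other_than_cut by metis
  have "derivable pos T (Foc G0 P)"
    using decide by simp
  then show ?case using G1 decide(1) by (auto intro: derivable.decide)
next
  case (thy_unf \<Gamma>)
  have "T (ctx_lits G0 \<union> {p})"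
    using thy_unf by (simp add: ctx_lits_add_atom)
  then have "T (ctx_lits G0)"
    using procedure_consistency[OF T finite_ctx_lits _ thy_unf(4)] by blast
  then show ?case by (auto intro: derivable.thy_unf)
qed (auto intro: derivable.andP derivable.orP1 derivable.orP2 derivable.ex
    derivable.release derivable.andN derivable.orN)

theorem mainTheorem4:
  fixes pos :: "'p \<Rightarrow> bool" and T :: "('p, 'f) lit set \<Rightarrow> bool"
    and \<Gamma> :: "('p, 'f) fm multiset" and p :: "('p, 'f) lit"
    and B :: "('p, 'f) fm" and \<Delta> :: "('p, 'f) fm multiset"
  assumes "procedure T"
    and "is_context pos \<Gamma>"
    and "positive_lit pos p"
    and "T (ctx_lits \<Gamma> \<union> {lneg p})"
  shows "(derivable pos T (Unf (add_mset (Atom p) \<Gamma>) \<Delta>) \<longrightarrow> derivable pos T (Unf \<Gamma> \<Delta>))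
       \<and> (derivable pos T (Foc (add_mset (Atom p) \<Gamma>) B) \<longrightarrow> derivable pos T (Foc \<Gamma> B))"
proof (intro conjI impI)
  assume "derivable pos T (Unf (add_mset (Atom p) \<Gamma>) \<Delta>)"
  from cut_refuted_literal[OF this assms(1) _ assms(3,4)]
  show "derivable pos T (Unf \<Gamma> \<Delta>)" by simp
next
  assume "derivable pos T (Foc (add_mset (Atom p) \<Gamma>) B)"
  from cut_refuted_literal[OF this assms(1) _ assms(3,4)]
  show "derivable pos T (Foc \<Gamma> B)" by simp
qed

end
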